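(* Let $r\ge 0$, let $l_1,\ldots,l_r,\theta_1,\ldots,\theta_r,L$ be real numbers, $u_j=l_j+i\theta_j$, and for $z=x+iy$ ($x,y$ real) let $$A(z)=\begin{pmatrix}\cos y & -e^{x}\sin y\\ -e^{-x}\sin y & -\cos y\end{pmatrix},\qquad \Gamma_L=\begin{pmatrix}e^{L/2}&0\\0&e^{-L/2}\end{pmatrix}.$$ Then $$\operatorname{Tr}\big(A(u_1)A(u_2)\cdots A(u_r)\Gamma_L\big)=\sum_{I\subseteq\{1,\ldots,r\},\ |I|\text{ even}}(-1)^{s(I)}\sin(\theta_I)\cos(\theta_{\hat I})\big(e^{L/2-L_I}+(-1)^r e^{L_I-L/2}\big).$$ Equivalently, the right-hand side equals $\sum_{|I|\text{ even}}(-1)^{s(I)}2\sin(\theta_I)\cos(\theta_{\hat I})\cosh(L/2-L_I)$ when $r$ is even and $\sum_{|I|\text{ even}}(-1)^{s(I)}2\sin(\theta_I)\cos(\theta_{\hat I})\sinh(L/2-L_I)$ when $r$ is odd. (For $r=0$ the product of the $A$'s is the identity.)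
   Context: For a subset $I=\{i_1<\cdots<i_k\}\subseteq\{1,\ldots,r\}$ with $k$ even: $L_I=\sum_{j=1}^k(-1)^j l_{i_j}=-l_{i_1}+l_{i_2}-\cdots+l_{i_k}$; $s(I)=\sum_{m=1}^{k/2}(i_{2m}-i_{2m-1}+1)$; $\sin(\theta_I)=\prod_{i\in I}\sin\theta_i$; $\cos(\theta_{\hat I})=\prod_{i\in\{1,\ldots,r\}\setminus I}\cos\theta_i$. Empty products equal $1$, and for $I=\emptyset$, $L_I=0$ and $s(I)=0$. *)

theory Defs
  imports "HOL-Analysis.Analysis"
begin

definition Amat :: "complex \<Rightarrow> real^2^2" where
  "Amat z = (let x = Re z; y = Im z in
     vector [vector [cos y, - exp x * sin y],
             vector [- exp (- x) * sin y, - cos y]])"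

definition Gamma_mat :: "real \<Rightarrow> real^2^2" where
  "Gamma_mat L = vector [vector [exp (L/2), 0], vector [0, exp (- L/2)]]"

definition mat_prod_upto :: "(nat \<Rightarrow> real^2^2) \<Rightarrow> nat \<Rightarrow> real^2^2" where
  "mat_prod_upto M r = foldr (\<lambda>j P. M j ** P) [1..<r+1] (mat 1)"

definition L_alt :: "(nat \<Rightarrow> real) \<Rightarrow> nat set \<Rightarrow> real" where
  "L_alt l I = (let xs = sorted_list_of_set I in
     (\<Sum>j<length xs. (-1) ^ (j+1) * l (xs ! j)))"

definition s_of :: "nat set \<Rightarrow> nat" where
  "s_of I = (let xs = sorted_list_of_set I in
     (\<Sum>m<length xs div 2. xs ! (2*m+1) - xs ! (2*m) + 1))"

end

theory Submission
  imports Defs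
begin

text \<open>Each entry of \<open>A(u_1) \<cdots> A(u_r)\<close> is a signed sum over subsets \<open>I \<subseteq> {1..r}\<close> of
  \<open>sin(\<theta>_I) cos(\<theta>_\<hat>I) exp(\<plusminus>L_I)\<close>; the diagonal entries collect the even subsets, the
  off-diagonal ones the odd subsets.  Multiplying by \<open>A(u_(r+1))\<close> either leaves \<open>r + 1\<close> out of
  \<open>I\<close> (a factor \<open>\<plusminus>cos \<theta>_(r+1)\<close>) or appends it as the new largest element, which flips the
  parity of \<open>I\<close> and shifts \<open>L_I\<close> by \<open>\<plusminus>l_(r+1)\<close>, matching the factor
  \<open>sin \<theta>_(r+1) exp(\<plusminus>l_(r+1))\<close>.  This recurrence drives an induction on \<open>r\<close>; the trace
  against the diagonal matrix \<open>\<Gamma>_L\<close> then only sees the two even-subset sums.\<close>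

lemma sorted_list_of_set_insert_greater:
  assumes "finite I" "\<forall>i\<in>I. i < n"
  shows "sorted_list_of_set (insert n I) = sorted_list_of_set I @ [n]"
proof -
  have "n \<notin> I" using assms(2) by blast
  then show ?thesis
    using assms by (simp add: sorted_list_of_set_insert sorted_insort_is_snoc less_imp_le)
qed

lemma last_sorted_list_of_set:
  assumes "finite I" "I \<noteq> {}"
  shows "last (sorted_list_of_set I) = Max I"
proof (rule Max_eqI[symmetric])
  define xs where "xs = sorted_list_of_set I"
  have "xs \<noteq> []" "sorted xs" "set xs = I" using assms by (simp_all add: xs_def)
  show "y \<le> last xs" if "y \<in> I" for y
  proof -
    obtain i where "i < length xs" "y = xs ! i"
      using \<open>y \<in> I\<close> \<open>set xs = I\<close> by (metis in_set_conv_nth)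
    then show ?thesis
      using \<open>sorted xs\<close> \<open>xs \<noteq> []\<close> by (simp add: last_conv_nth sorted_nth_mono)
  qed
  show "last xs \<in> I" using \<open>xs \<noteq> []\<close> \<open>set xs = I\<close> by auto
qed (use assms in auto)

lemma L_alt_insert_greater:
  assumes "finite I" "\<forall>i\<in>I. i < n"
  shows "L_alt l (insert n I) = L_alt l I + (-1) ^ (card I + 1) * l n"
  using assms(1) unfolding L_alt_def Let_def sorted_list_of_set_insert_greater[OF assms]
  by (simp add: nth_append)

lemma s_of_insert_greater:
  assumes "finite I" "\<forall>i\<in>I. i < n"
  shows "s_of (insert n I) = s_of I + (if odd (card I) then n - Max I + 1 else 0)"
proof -
  define xs where "xs = sorted_list_of_set I"
  define ys where "ys = xs @ [n]"
  have len: "length xs = card I" using xs_def by simp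
  have s_of_I: "s_of I = (\<Sum>m<card I div 2. xs ! (2*m+1) - xs ! (2*m) + 1)"
    unfolding s_of_def Let_def xs_def[symmetric] len ..
  have pairs: "(\<Sum>m<card I div 2. ys ! (2*m+1) - ys ! (2*m) + 1) = s_of I"
    unfolding s_of_I ys_def by (intro sum.cong) (auto simp: nth_append len)
  have last_pair: "ys ! card I - ys ! (card I - 1) + 1 = n - Max I + 1" if "odd (card I)"
  proof -
    have "I \<noteq> {}" using that by auto
    have "xs ! (card I - 1) = last xs"
      using \<open>I \<noteq> {}\<close> assms(1) len by (simp add: xs_def last_conv_nth)
    also have "\<dots> = Max I"
      unfolding xs_def using assms(1) \<open>I \<noteq> {}\<close> by (rule last_sorted_list_of_set)
    finally show ?thesis using that len by (simp add: ys_def nth_append odd_pos)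
  qed
  have "s_of (insert n I) = (\<Sum>m<Suc (card I) div 2. ys ! (2*m+1) - ys ! (2*m) + 1)"
    unfolding s_of_def Let_def sorted_list_of_set_insert_greater[OF assms]
      xs_def[symmetric] ys_def[symmetric]
    using len by (simp add: ys_def)
  also have "\<dots> = (\<Sum>m<card I div 2. ys ! (2*m+1) - ys ! (2*m) + 1)
      + (if odd (card I) then ys ! card I - ys ! (card I - 1) + 1 else 0)"
    by (cases "odd (card I)") (simp_all add: odd_pos)
  also have "\<dots> = s_of I + (if odd (card I) then n - Max I + 1 else 0)"
    using pairs last_pair by simp
  finally show ?thesis .
qed

lemma sum_subsets_insert:
  fixes f :: "'a set \<Rightarrow> 'b::comm_monoid_add"
  assumes "finite A" "a \<notin> A"
  shows "(\<Sum>I\<in>{I. I \<subseteq> insert a A \<and> P (card I)}. f I)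
    = (\<Sum>I\<in>{I. I \<subseteq> A \<and> P (card I)}. f I)
      + (\<Sum>I\<in>{I. I \<subseteq> A \<and> P (Suc (card I))}. f (insert a I))"
proof -
  let ?A = "{I. I \<subseteq> A \<and> P (card I)}" and ?B = "{I. I \<subseteq> A \<and> P (Suc (card I))}"
  have card_insert: "card (insert a I) = Suc (card I)" if "I \<subseteq> A" for I
    using that assms by (meson card_insert_disjoint finite_subset subsetD)
  have split: "{I. I \<subseteq> insert a A \<and> P (card I)} = ?A \<union> insert a ` ?B"
  proof (intro equalityI subsetI)
    fix I assume I: "I \<in> {I. I \<subseteq> insert a A \<and> P (card I)}"
    show "I \<in> ?A \<union> insert a ` ?B"
    proof (cases "a \<in> I")
      case True
      then have "I = insert a (I - {a})" "I - {a} \<subseteq> A" using I by auto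
      then have "I - {a} \<in> ?B" using I card_insert by (metis (mono_tags, lifting) mem_Collect_eq)
      then show ?thesis using \<open>I = insert a (I - {a})\<close> by blast
    qed (use I in auto)
  qed (use card_insert in auto)
  have "inj_on (insert a) ?B"
    using assms(2) by (intro inj_onI) (metis insert_ident subsetD mem_Collect_eq)
  then have reindex: "sum f (insert a ` ?B) = (\<Sum>I\<in>?B. f (insert a I))"
    by (rule sum.reindex_cong) simp_all
  have "finite ?A" "finite (insert a ` ?B)"
    using assms(1) by (simp_all add: finite_subset[of _ "Pow A"])
  moreover have "?A \<inter> insert a ` ?B = {}" using assms(2) by blast
  ultimately show ?thesis unfolding split reindex[symmetric] by (rule sum.union_disjoint)
qed

definition trig_weight :: "(nat \<Rightarrow> real) \<Rightarrow> nat \<Rightarrow> nat set \<Rightarrow> real" where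
  "trig_weight \<theta> r I = (\<Prod>i\<in>I. sin (\<theta> i)) * (\<Prod>i\<in>{1..r} - I. cos (\<theta> i))"

text \<open>For odd \<open>I\<close> the last element is paired with a phantom index \<open>r + 1\<close>, which
  contributes \<open>r + 1 - Max I + 1 \<equiv> r - Max I\<close> to the exponent.\<close>
definition pair_sign :: "nat \<Rightarrow> nat set \<Rightarrow> real" where
  "pair_sign r I = (-1) ^ (s_of I + (if odd (card I) then r - Max I else 0))"

definition parity_sum :: "(nat \<Rightarrow> real) \<Rightarrow> (nat \<Rightarrow> real) \<Rightarrow> bool \<Rightarrow> real \<Rightarrow> nat \<Rightarrow> real" where
  "parity_sum l \<theta> p t r = (\<Sum>I\<in>{I. I \<subseteq> {1..r} \<and> even (card I) = p}.
     pair_sign r I * trig_weight \<theta> r I * exp (t * L_alt l I))"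

lemma trig_weight_Suc:
  assumes "I \<subseteq> {1..r}"
  shows "trig_weight \<theta> (Suc r) I = cos (\<theta> (Suc r)) * trig_weight \<theta> r I"
proof -
  have "{1..Suc r} - I = insert (Suc r) ({1..r} - I)" using assms by (auto simp: le_Suc_eq)
  then show ?thesis unfolding trig_weight_def by simp
qed

lemma trig_weight_Suc_insert:
  assumes "I \<subseteq> {1..r}"
  shows "trig_weight \<theta> (Suc r) (insert (Suc r) I) = sin (\<theta> (Suc r)) * trig_weight \<theta> r I"
proof -
  have "{1..Suc r} - insert (Suc r) I = {1..r} - I" using assms by (auto simp: le_Suc_eq)
  moreover have "finite I" "Suc r \<notin> I" using assms finite_subset by auto
  ultimately show ?thesis unfolding trig_weight_def by simp
qed

lemma pair_sign_Suc:
  assumes "I \<subseteq> {1..r}"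
  shows "pair_sign (Suc r) I = (-1) ^ card I * pair_sign r I"
proof (cases "odd (card I)")
  case True
  then have "I \<noteq> {}" "finite I" using assms finite_subset by auto
  then have "Max I \<le> r" using assms by (meson Max_in atLeastAtMost_iff subsetD)
  then show ?thesis using True by (simp add: pair_sign_def Suc_diff_le)
qed (simp add: pair_sign_def)

lemma pair_sign_Suc_insert:
  assumes "I \<subseteq> {1..r}"
  shows "pair_sign (Suc r) (insert (Suc r) I) = pair_sign r I"
proof -
  have "finite I" "Suc r \<notin> I" and less: "\<forall>i\<in>I. i < Suc r"
    using assms finite_subset by auto
  then have card: "card (insert (Suc r) I) = Suc (card I)" by simp
  show ?thesis
  proof (cases "odd (card I)")
    case True
    then have "I \<noteq> {}" using \<open>finite I\<close> by auto
    then have "Max I \<le> r" using assms \<open>finite I\<close> by (meson Max_in atLeastAtMost_iff subsetD)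
    then have "Suc r - Max I + 1 = (r - Max I) + 2" by simp
    then show ?thesis
      using True unfolding pair_sign_def card s_of_insert_greater[OF \<open>finite I\<close> less]
      by (simp add: power_add)
  next
    case False
    have "Max (insert (Suc r) I) = Suc r" using \<open>finite I\<close> less by (auto intro!: Max_eqI)
    then show ?thesis
      using False unfolding pair_sign_def card s_of_insert_greater[OF \<open>finite I\<close> less] by simp
  qed
qed

lemma parity_sum_Suc:
  "parity_sum l \<theta> p t (Suc r)
     = (if p then 1 else -1) * cos (\<theta> (Suc r)) * parity_sum l \<theta> p t r
       + sin (\<theta> (Suc r)) * exp ((if p then t else -t) * l (Suc r)) * parity_sum l \<theta> (\<not> p) t r"
proof -
  have "{1..Suc r} = insert (Suc r) {1..r}" by (simp add: atLeastAtMostSuc_conv)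
  then have "parity_sum l \<theta> p t (Suc r)
    = (\<Sum>I\<in>{I. I \<subseteq> {1..r} \<and> even (card I) = p}.
         pair_sign (Suc r) I * trig_weight \<theta> (Suc r) I * exp (t * L_alt l I))
    + (\<Sum>I\<in>{I. I \<subseteq> {1..r} \<and> odd (card I) = p}.
         pair_sign (Suc r) (insert (Suc r) I) * trig_weight \<theta> (Suc r) (insert (Suc r) I)
         * exp (t * L_alt l (insert (Suc r) I)))"
    unfolding parity_sum_def
    using sum_subsets_insert[where A="{1..r}" and a="Suc r" and P="\<lambda>n. even n = p"] by simp
  also have "(\<Sum>I\<in>{I. I \<subseteq> {1..r} \<and> even (card I) = p}.
         pair_sign (Suc r) I * trig_weight \<theta> (Suc r) I * exp (t * L_alt l I))
      = (if p then 1 else -1) * cos (\<theta> (Suc r)) * parity_sum l \<theta> p t r"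
    unfolding parity_sum_def sum_distrib_left
    by (intro sum.cong) (auto simp: pair_sign_Suc trig_weight_Suc)
  also have "(\<Sum>I\<in>{I. I \<subseteq> {1..r} \<and> odd (card I) = p}.
         pair_sign (Suc r) (insert (Suc r) I) * trig_weight \<theta> (Suc r) (insert (Suc r) I)
         * exp (t * L_alt l (insert (Suc r) I)))
      = sin (\<theta> (Suc r)) * exp ((if p then t else -t) * l (Suc r)) * parity_sum l \<theta> (\<not> p) t r"
    unfolding parity_sum_def sum_distrib_left
  proof (intro sum.cong)
    fix I assume "I \<in> {I. I \<subseteq> {1..r} \<and> even (card I) = (\<not> p)}"
    then have I: "I \<subseteq> {1..r}" "even (card I) = (\<not> p)" by auto
    then have "finite I" "\<forall>i\<in>I. i < Suc r" using finite_subset by auto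
    then have "t * L_alt l (insert (Suc r) I) = (if p then t else -t) * l (Suc r) + t * L_alt l I"
      using I(2) by (simp add: L_alt_insert_greater algebra_simps)
    then show "pair_sign (Suc r) (insert (Suc r) I) * trig_weight \<theta> (Suc r) (insert (Suc r) I)
         * exp (t * L_alt l (insert (Suc r) I))
      = sin (\<theta> (Suc r)) * exp ((if p then t else -t) * l (Suc r))
         * (pair_sign r I * trig_weight \<theta> r I * exp (t * L_alt l I))"
      using I(1) by (simp add: pair_sign_Suc_insert trig_weight_Suc_insert exp_add)
  qed auto
  finally show ?thesis .
qed

lemma parity_sum_0: "parity_sum l \<theta> p t 0 = (if p then 1 else 0)"
proof -
  have "{I. I \<subseteq> {1..0::nat} \<and> even (card I) = p} = (if p then {{}} else {})" by auto
  then show ?thesis by (simp add: parity_sum_def pair_sign_def trig_weight_def s_of_def L_alt_def)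
qed

lemma matrix_mult_2x2:
  fixes a b c d e f g h :: "'a::semiring_1"
  shows "(vector [vector [a, b], vector [c, d]] :: 'a^2^2) ** (vector [vector [e, f], vector [g, h]] :: 'a^2^2)
    = vector [vector [a*e + b*g, a*f + b*h], vector [c*e + d*g, c*f + d*h]]"
  unfolding vec_eq_iff forall_2 by (simp add: matrix_matrix_mult_def sum_2)

lemma mat_1_2x2: "(mat 1 :: 'a::zero_neq_one^2^2) = vector [vector [1, 0], vector [0, 1]]"
  unfolding vec_eq_iff forall_2 by (simp add: mat_def)

lemma Amat_Complex:
  "Amat (Complex x y) = vector [vector [cos y, - exp x * sin y], vector [- exp (- x) * sin y, - cos y]]"
  by (simp add: Amat_def)

lemma mat_prod_upto_Suc: "mat_prod_upto M (Suc r) = mat_prod_upto M r ** M (Suc r)"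
proof -
  have fold_mult: "foldr (\<lambda>j P. M j ** P) js B = foldr (\<lambda>j P. M j ** P) js (mat 1) ** B" for js B
    by (induction js) (simp_all add: matrix_mul_assoc)
  have "[1..<Suc r + 1] = [1..<r + 1] @ [Suc r]" by simp
  then show ?thesis unfolding mat_prod_upto_def
    by (simp only: foldr_append) (simp add: fold_mult[of _ "M (Suc r)"] matrix_mul_rid)
qed

lemma mat_prod_upto_Amat:
  "mat_prod_upto (\<lambda>j. Amat (Complex (l j) (\<theta> j))) r
    = vector [vector [parity_sum l \<theta> True (-1) r, - parity_sum l \<theta> False (-1) r],
              vector [(-1)^r * parity_sum l \<theta> False 1 r, (-1)^r * parity_sum l \<theta> True 1 r]]"
proof (induction r)
  case 0
  show ?case by (simp add: mat_prod_upto_def mat_1_2x2 parity_sum_0)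
next
  case (Suc r)
  show ?case
    unfolding mat_prod_upto_Suc Suc.IH
    by (simp add: Amat_Complex matrix_mult_2x2 parity_sum_Suc algebra_simps)
qed

lemma trace_mult_Gamma_mat:
  "trace (vector [vector [a, b], vector [c, d]] ** Gamma_mat L) = a * exp (L/2) + d * exp (- L/2)"
  by (simp add: Gamma_mat_def matrix_mult_2x2 trace_def sum_2)

lemma parity_sum_trace_form:
  "parity_sum l \<theta> True (-1) r * exp (L/2) + (-1) ^ r * parity_sum l \<theta> True 1 r * exp (- L/2)
   = (\<Sum>I\<in>{I. I \<subseteq> {1..r} \<and> even (card I)}.
        (-1) ^ s_of I * (\<Prod>i\<in>I. sin (\<theta> i)) * (\<Prod>i\<in>{1..r} - I. cos (\<theta> i))
        * (exp (L/2 - L_alt l I) + (-1) ^ r * exp (L_alt l I - L/2)))"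
proof -
  have split_exp: "exp (L/2 - x) = exp (-1 * x) * exp (L/2)" "exp (x - L/2) = exp (1 * x) * exp (- L/2)"
    for x :: real
    by (simp_all flip: exp_add)
  show ?thesis
    unfolding split_exp parity_sum_def sum_distrib_left sum_distrib_right sum.distrib[symmetric]
    by (intro sum.cong) (auto simp: pair_sign_def trig_weight_def algebra_simps)
qed

lemma exp_diff_add_signed:
  fixes a b :: real
  shows "exp (a - b) + (-1) ^ r * exp (b - a) = 2 * (if even r then cosh (a - b) else sinh (a - b))"
  by (simp add: cosh_def sinh_def)

theorem mainTheorem2:
  fixes r :: nat and l \<theta> :: "nat \<Rightarrow> real" and L :: real
  defines "u \<equiv> (\<lambda>j. Complex (l j) (\<theta> j))"
  shows "trace (mat_prod_upto (\<lambda>j. Amat (u j)) r ** Gamma_mat L)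
     = (\<Sum>I\<in>{I. I \<subseteq> {1..r} \<and> even (card I)}.
          (-1) ^ s_of I * (\<Prod>i\<in>I. sin (\<theta> i)) * (\<Prod>i\<in>{1..r} - I. cos (\<theta> i))
          * (exp (L/2 - L_alt l I) + (-1) ^ r * exp (L_alt l I - L/2)))
   \<and> (\<Sum>I\<in>{I. I \<subseteq> {1..r} \<and> even (card I)}.
          (-1) ^ s_of I * (\<Prod>i\<in>I. sin (\<theta> i)) * (\<Prod>i\<in>{1..r} - I. cos (\<theta> i))
          * (exp (L/2 - L_alt l I) + (-1) ^ r * exp (L_alt l I - L/2)))
     = (if even r then
          (\<Sum>I\<in>{I. I \<subseteq> {1..r} \<and> even (card I)}.
             (-1) ^ s_of I * 2 * (\<Prod>i\<in>I. sin (\<theta> i)) * (\<Prod>i\<in>{1..r} - I. cos (\<theta> i))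
             * cosh (L/2 - L_alt l I))
        else
          (\<Sum>I\<in>{I. I \<subseteq> {1..r} \<and> even (card I)}.
             (-1) ^ s_of I * 2 * (\<Prod>i\<in>I. sin (\<theta> i)) * (\<Prod>i\<in>{1..r} - I. cos (\<theta> i))
             * sinh (L/2 - L_alt l I)))"
proof -
  have "trace (mat_prod_upto (\<lambda>j. Amat (u j)) r ** Gamma_mat L)
      = parity_sum l \<theta> True (-1) r * exp (L/2) + (-1) ^ r * parity_sum l \<theta> True 1 r * exp (- L/2)"
    by (simp add: u_def mat_prod_upto_Amat trace_mult_Gamma_mat)
  then show ?thesis
    unfolding parity_sum_trace_form exp_diff_add_signed by (cases "even r") (simp_all add: mult_ac)
qed

end
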